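(* Let $0<A<B$, let $z\in \mathbb{C}\setminus\{0\}$ and $Y>0$. Then $$\int_{-\pi}^{\pi} \int_{A}^{B} \min\left\{\|\Im(zRe^{\theta i})\|^{-1}, Y\right\}^{1/2} \cdot \min\left\{\|\Re(zRe^{\theta i})\|^{-1}, Y\right\}^{1/2} \, dR \, d\theta \ll_{A,B} \max\{1,|z|^{-1}\}\log (2+Y),$$ where the implied constant depends only on $A$ and $B$.
   Context: For $x\in\mathbb{R}$, $\|x\|$ denotes the distance from $x$ to the nearest integer (with $\|x\|^{-1}=\infty$ if $x\in\mathbb{Z}$, so the minimum is then $Y$). *)

theory Defs
  imports "HOL-Analysis.Analysis"
begin

definition dnint :: "real \<Rightarrow> real" where
  "dnint x = \<bar>x - of_int (round x)\<bar>"

text \<open>min of the inverse distance to the nearest integer and Y, with the convention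
  that the inverse is infinite (so the minimum is Y) when x is an integer.\<close>
definition minY :: "real \<Rightarrow> real \<Rightarrow> real" where
  "minY Y x = (if dnint x = 0 then Y else min (1 / dnint x) Y)"

end

theory Submission
  imports Defs
begin

text \<open>Write \<open>z R e\<^sup>i\<^sup>\<theta>\<close> in polar form: its imaginary and real parts are
  \<open>R |z| sin (\<theta> + arg z)\<close> and \<open>R |z| cos (\<theta> + arg z)\<close>. Bound the geometric mean of
  the two factors by their arithmetic mean and \<open>min {\<parallel>x\<parallel>\<^sup>-\<^sup>1, Y}\<close> by
  \<open>2Y / (1 + Y \<parallel>x\<parallel>)\<close>. For fixed \<open>\<theta>\<close> the \<open>R\<close>-integral of \<open>1 / (1 + Y \<parallel>c R\<parallel>)\<close>
  is at most \<open>(B - A) / (1 + Y |c| A)\<close> if \<open>|c| B < 1/2\<close>, since then \<open>\<parallel>c R\<parallel> = |c| R\<close>;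
  otherwise it is \<open>O(B log (1 + Y) / Y)\<close>, because every period of \<open>\<parallel>c R\<parallel>\<close> contributes
  exactly \<open>2 log (1 + Y/2) / (Y |c|)\<close>. Finally \<open>|sin s| \<ge> \<parallel>s/\<pi>\<parallel>\<close>, so the \<open>\<theta>\<close>-integral
  of \<open>1 / (1 + K |sin (\<theta> + arg z)|)\<close> with \<open>K = A Y |z|\<close> is again a periodic integral, of
  size \<open>O(log (1 + K) / K)\<close>; and \<open>log (1 + K) / |z| = O(max {1, |z|\<^sup>-\<^sup>1} log (2 + Y))\<close>.\<close>

lemma dnint_le: "dnint x \<le> \<bar>x - of_int n\<bar>"
  unfolding dnint_def by (rule round_diff_minimal)

lemma dnint_nonneg [simp]: "0 \<le> dnint x"
  by (simp add: dnint_def)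

lemma dnint_eq:
  assumes "\<bar>x - of_int n\<bar> \<le> 1/2"
  shows "dnint x = \<bar>x - of_int n\<bar>"
proof -
  have "\<bar>x - of_int n\<bar> \<le> \<bar>x - of_int (round x)\<bar>"
  proof (cases "round x = n")
    case False
    then have "1 \<le> \<bar>of_int (round x) - (of_int n :: real)\<bar>"
      by (metis of_int_1_le_iff of_int_abs of_int_diff zero_less_abs_iff right_minus_eq int_one_le_iff_zero_less)
    then show ?thesis using assms by linarith
  qed simp
  then show ?thesis using dnint_le[of x n] unfolding dnint_def by linarith
qed

lemma dnint_minus [simp]: "dnint (- x) = dnint x"
  using dnint_le[of "- x" "- round x"] dnint_le[of x "- round (- x)"]
  unfolding dnint_def by simp

lemma continuous_on_dnint: "continuous_on S dnint"
proof -
  have "\<bar>dnint x - dnint y\<bar> \<le> \<bar>x - y\<bar>" for x y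
    using dnint_le[of x "round y"] dnint_le[of y "round x"] unfolding dnint_def by linarith
  then have "isCont dnint x" for x
    unfolding continuous_at_eps_delta dist_real_def using le_less_trans by blast
  then show ?thesis
    by (simp add: continuous_at_imp_continuous_on)
qed

definition dnint_weight :: "real \<Rightarrow> real \<Rightarrow> real" where
  "dnint_weight k x = 1 / (1 + k * dnint x)"

lemma one_add_mult_dnint_pos: "0 \<le> k \<Longrightarrow> 0 < 1 + k * dnint x"
  by (simp add: add_pos_nonneg)

lemma dnint_weight_nonneg: "0 \<le> k \<Longrightarrow> 0 \<le> dnint_weight k x"
  using one_add_mult_dnint_pos[of k x] by (simp add: dnint_weight_def)

lemma dnint_weight_le:
  assumes "0 \<le> k" and "0 \<le> u" and "u \<le> dnint x"
  shows "dnint_weight k x \<le> 1 / (1 + k * u)"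
  unfolding dnint_weight_def using assms
  by (intro frac_le add_left_mono mult_left_mono) (auto intro: add_pos_nonneg)

lemma continuous_on_dnint_weight [continuous_intros]:
  assumes "0 \<le> k" and "continuous_on S f"
  shows "continuous_on S (\<lambda>x. dnint_weight k (f x))"
proof -
  have "continuous_on S (\<lambda>x. dnint (f x))"
    using continuous_on_compose2[OF continuous_on_dnint[of UNIV] assms(2)] by simp
  moreover have "1 + k * dnint (f x) \<noteq> 0" for x
    using one_add_mult_dnint_pos[OF assms(1), of "f x"] by linarith
  ultimately show ?thesis
    unfolding dnint_weight_def by (auto intro!: continuous_intros)
qed

lemma minY_le_dnint_weight:
  assumes "0 < Y"
  shows "minY Y x \<le> 2 * Y * dnint_weight Y x"
proof (cases "Y * dnint x \<le> 1")
  case True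
  then have "Y \<le> 2 * Y / (1 + Y * dnint x)"
    using assms one_add_mult_dnint_pos[of Y x] by (simp add: field_simps)
  then show ?thesis
    unfolding minY_def dnint_weight_def using assms by (auto simp: min_le_iff_disj)
next
  case False
  then have "dnint x \<noteq> 0"
    by auto
  then have "dnint x > 0"
    using dnint_nonneg[of x] by linarith
  moreover have "1 / dnint x \<le> 2 * Y / (1 + Y * dnint x)"
    using False \<open>dnint x > 0\<close> by (simp add: field_simps)
  ultimately show ?thesis
    unfolding minY_def dnint_weight_def by simp
qed

lemma minY_nonneg: "0 < Y \<Longrightarrow> 0 \<le> minY Y x"
  by (simp add: minY_def)

lemma has_integral_inverse_affine:
  fixes k \<alpha> c a b :: real
  assumes "0 < k" and "\<alpha> \<noteq> 0" and "a \<le> b"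
    and nonneg: "\<And>x. x \<in> {a..b} \<Longrightarrow> 0 \<le> \<alpha> * x + c"
  shows "((\<lambda>x. 1 / (1 + k * (\<alpha> * x + c))) has_integral
      (ln (1 + k * (\<alpha> * b + c)) - ln (1 + k * (\<alpha> * a + c))) / (k * \<alpha>)) {a..b}"
proof -
  define F where "F x = ln (1 + k * (\<alpha> * x + c)) / (k * \<alpha>)" for x
  have "((\<lambda>x. 1 / (1 + k * (\<alpha> * x + c))) has_integral (F b - F a)) {a..b}"
  proof (rule fundamental_theorem_of_calculus[OF \<open>a \<le> b\<close>])
    fix x assume "x \<in> {a..b}"
    then have "0 < 1 + k * (\<alpha> * x + c)"
      using nonneg \<open>0 < k\<close> by (simp add: add_pos_nonneg)
    then have "(F has_real_derivative 1 / (1 + k * (\<alpha> * x + c))) (at x within {a..b})"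
      unfolding F_def using assms(1,2) by (auto intro!: derivative_eq_intros simp: divide_simps)
    then show "(F has_vector_derivative 1 / (1 + k * (\<alpha> * x + c))) (at x within {a..b})"
      by (simp add: has_real_derivative_iff_has_vector_derivative)
  qed
  then show ?thesis
    unfolding F_def by (simp add: diff_divide_distrib)
qed

lemma has_integral_dnint_weight_half_cell:
  fixes \<alpha> k \<beta> :: real and n :: int
  assumes "0 < \<alpha>" and "0 < k"
  shows "((\<lambda>x. dnint_weight k (\<alpha> * x + \<beta>)) has_integral ln (1 + k / 2) / (k * \<alpha>))
    {(of_int n - \<beta>) / \<alpha> .. (of_int n + 1/2 - \<beta>) / \<alpha>}"
proof -
  define m r c where "m = (of_int n - \<beta>) / \<alpha>" and "r = (of_int n + 1/2 - \<beta>) / \<alpha>"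
    and "c = \<beta> - of_int n"
  have "m \<le> r" and at_m: "\<alpha> * m + c = 0" and at_r: "\<alpha> * r + c = 1/2"
    using assms unfolding m_def r_def c_def by (auto simp: divide_right_mono field_simps)
  have on_cell: "\<alpha> * x + c \<in> {0..1/2}" if "x \<in> {m..r}" for x
  proof -
    have "\<alpha> * m \<le> \<alpha> * x" "\<alpha> * x \<le> \<alpha> * r"
      using that assms by auto
    then show ?thesis
      using at_m at_r by auto
  qed
  have "((\<lambda>x. 1 / (1 + k * (\<alpha> * x + c))) has_integral
      (ln (1 + k * (\<alpha> * r + c)) - ln (1 + k * (\<alpha> * m + c))) / (k * \<alpha>)) {m..r}"
  proof (rule has_integral_inverse_affine)
    show "0 \<le> \<alpha> * x + c" if "x \<in> {m..r}" for x
      using on_cell[OF that] by simp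
  qed (use assms \<open>m \<le> r\<close> in auto)
  then have "((\<lambda>x. 1 / (1 + k * (\<alpha> * x + c))) has_integral ln (1 + k / 2) / (k * \<alpha>)) {m..r}"
    using at_m at_r by simp
  then show ?thesis
    unfolding m_def[symmetric] r_def[symmetric]
  proof (rule has_integral_eq[rotated])
    fix x assume "x \<in> {m..r}"
    then have "dnint (\<alpha> * x + \<beta>) = \<alpha> * x + c"
      using on_cell dnint_eq[of "\<alpha> * x + \<beta>" n] unfolding c_def by fastforce
    then show "1 / (1 + k * (\<alpha> * x + c)) = dnint_weight k (\<alpha> * x + \<beta>)"
      by (simp add: dnint_weight_def)
  qed
qed

text \<open>The left half of a cell is the mirror image of a right half, as \<open>dnint\<close> is even.\<close>

lemma has_integral_dnint_weight_cell:
  fixes \<alpha> k \<beta> :: real and n :: int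
  assumes "0 < \<alpha>" and "0 < k"
  shows "((\<lambda>x. dnint_weight k (\<alpha> * x + \<beta>)) has_integral 2 * ln (1 + k / 2) / (k * \<alpha>))
    {(of_int n - 1/2 - \<beta>) / \<alpha> .. (of_int n + 1/2 - \<beta>) / \<alpha>}"
proof -
  have "((\<lambda>x. dnint_weight k (\<alpha> * x + (- \<beta>))) has_integral ln (1 + k / 2) / (k * \<alpha>))
      {(of_int (- n) - (- \<beta>)) / \<alpha> .. (of_int (- n) + 1/2 - (- \<beta>)) / \<alpha>}"
    by (rule has_integral_dnint_weight_half_cell[OF assms])
  then have reflected: "((\<lambda>x. dnint_weight k (\<alpha> * (- x) + (- \<beta>))) has_integral ln (1 + k / 2) / (k * \<alpha>))
      {- ((of_int (- n) + 1/2 - (- \<beta>)) / \<alpha>) .. - ((of_int (- n) - (- \<beta>)) / \<alpha>)}"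
    by (rule iffD2[OF has_integral_reflect_real[where f = "\<lambda>x. dnint_weight k (\<alpha> * x + (- \<beta>))"]])
  have left: "((\<lambda>x. dnint_weight k (\<alpha> * x + \<beta>)) has_integral ln (1 + k / 2) / (k * \<alpha>))
      {(of_int n - 1/2 - \<beta>) / \<alpha> .. (of_int n - \<beta>) / \<alpha>}"
  proof -
    have "\<alpha> * (- x) + (- \<beta>) = - (\<alpha> * x + \<beta>)" for x
      by simp
    moreover have "- ((of_int (- n) + 1/2 - (- \<beta>)) / \<alpha>) = (of_int n - 1/2 - \<beta>) / \<alpha>"
      and "- ((of_int (- n) - (- \<beta>)) / \<alpha>) = (of_int n - \<beta>) / \<alpha>"
      using assms by (simp_all add: field_simps)
    ultimately show ?thesis
      using reflected by (simp only: dnint_weight_def dnint_minus)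
  qed
  have "((\<lambda>x. dnint_weight k (\<alpha> * x + \<beta>)) has_integral
      ln (1 + k / 2) / (k * \<alpha>) + ln (1 + k / 2) / (k * \<alpha>))
      {(of_int n - 1/2 - \<beta>) / \<alpha> .. (of_int n + 1/2 - \<beta>) / \<alpha>}"
    using assms by (intro has_integral_combine[OF _ _ left has_integral_dnint_weight_half_cell])
      (auto simp: divide_right_mono)
  then show ?thesis
    by (simp add: mult.commute)
qed

lemma has_integral_dnint_weight_cells:
  fixes \<alpha> k \<beta> :: real and n :: int
  assumes "0 < \<alpha>" and "0 < k"
  shows "((\<lambda>x. dnint_weight k (\<alpha> * x + \<beta>)) has_integral real N * (2 * ln (1 + k / 2) / (k * \<alpha>)))
    {(of_int n - 1/2 - \<beta>) / \<alpha> .. (of_int n + real N - 1/2 - \<beta>) / \<alpha>}"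
proof (induction N)
  case 0
  show ?case
    using has_integral_refl(2)[of _ "(of_int n - 1/2 - \<beta>) / \<alpha>"] by simp
next
  case (Suc N)
  have "((\<lambda>x. dnint_weight k (\<alpha> * x + \<beta>)) has_integral 2 * ln (1 + k / 2) / (k * \<alpha>))
      {(of_int n + real N - 1/2 - \<beta>) / \<alpha> .. (of_int n + real (Suc N) - 1/2 - \<beta>) / \<alpha>}"
    using has_integral_dnint_weight_cell[OF assms, of \<beta> "n + int N"] by (simp add: add_ac)
  with Suc.IH have "((\<lambda>x. dnint_weight k (\<alpha> * x + \<beta>)) has_integral
      real N * (2 * ln (1 + k / 2) / (k * \<alpha>)) + 2 * ln (1 + k / 2) / (k * \<alpha>))
      {(of_int n - 1/2 - \<beta>) / \<alpha> .. (of_int n + real (Suc N) - 1/2 - \<beta>) / \<alpha>}"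
    by (rule has_integral_combine[rotated 2]) (use assms in \<open>simp_all add: divide_right_mono\<close>)
  then show ?case
    by (simp add: algebra_simps add_divide_distrib)
qed

lemma integral_dnint_weight_le:
  fixes \<alpha> k \<beta> p q :: real
  assumes "0 < \<alpha>" and "0 < k" and "p \<le> q"
  shows "integral {p..q} (\<lambda>x. dnint_weight k (\<alpha> * x + \<beta>)) \<le> (q - p + 2 / \<alpha>) * (2 * ln (1 + k / 2) / k)"
proof -
  txt \<open>\<open>{p..q}\<close> is covered by \<open>N\<close> consecutive cells, starting with the cell \<open>n\<close> containing \<open>p\<close>.\<close>
  define n where "n = \<lfloor>\<alpha> * p + \<beta> + 1/2\<rfloor>"
  define N where "N = nat \<lceil>\<alpha> * (q - p)\<rceil> + 1"
  define l u where "l = (of_int n - 1/2 - \<beta>) / \<alpha>" and "u = (of_int n + real N - 1/2 - \<beta>) / \<alpha>"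
  have N: "\<alpha> * (q - p) + 1 \<le> real N" "real N \<le> \<alpha> * (q - p) + 2"
    unfolding N_def using assms by (auto simp: of_nat_nat) linarith+
  have "\<alpha> * p + \<beta> - 1/2 < of_int n" "of_int n \<le> \<alpha> * p + \<beta> + 1/2"
    unfolding n_def by linarith+
  then have "{p..q} \<subseteq> {l..u}"
    using assms N unfolding l_def u_def by (auto simp: field_simps)
  then have "integral {p..q} (\<lambda>x. dnint_weight k (\<alpha> * x + \<beta>)) \<le> integral {l..u} (\<lambda>x. dnint_weight k (\<alpha> * x + \<beta>))"
    using assms by (intro integral_subset_le integrable_continuous_real)
      (auto simp: dnint_weight_nonneg intro!: continuous_intros)
  also have "\<dots> = real N * (2 * ln (1 + k / 2) / (k * \<alpha>))"
    unfolding l_def u_def by (rule integral_unique[OF has_integral_dnint_weight_cells[OF assms(1,2)]])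
  also have "\<dots> \<le> (\<alpha> * (q - p) + 2) * (2 * ln (1 + k / 2) / (k * \<alpha>))"
    using N assms by (intro mult_right_mono) auto
  also have "\<dots> = (q - p + 2 / \<alpha>) * (2 * ln (1 + k / 2) / k)"
    using assms by (simp add: field_simps)
  finally show ?thesis .
qed

lemma integral_dnint_weight_dilation_le:
  fixes A B k c :: real
  assumes "0 < A" and "A < B" and "0 < k"
  shows "integral {A..B} (\<lambda>R. dnint_weight k (c * R)) \<le> (B - A) / (1 + k * \<bar>c\<bar> * A) + 10 * B * ln (1 + k / 2) / k"
proof -
  have first_nonneg: "0 \<le> (B - A) / (1 + k * \<bar>c\<bar> * A)" and second_nonneg: "0 \<le> 10 * B * ln (1 + k / 2) / k"
    using assms by simp_all
  show ?thesis
  proof (cases "1/2 \<le> \<bar>c\<bar> * B")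
    case True
    then have "0 < \<bar>c\<bar>"
      using assms by (cases "c = 0") auto
    have "dnint (c * R) = dnint (\<bar>c\<bar> * R + 0)" for R
      by (cases "0 \<le> c") auto
    then have "integral {A..B} (\<lambda>R. dnint_weight k (c * R)) = integral {A..B} (\<lambda>R. dnint_weight k (\<bar>c\<bar> * R + 0))"
      by (simp add: dnint_weight_def)
    also have "\<dots> \<le> (B - A + 2 / \<bar>c\<bar>) * (2 * ln (1 + k / 2) / k)"
      using assms \<open>0 < \<bar>c\<bar>\<close> by (intro integral_dnint_weight_le) auto
    also have "\<dots> \<le> (5 * B) * (2 * ln (1 + k / 2) / k)"
    proof (intro mult_right_mono)
      have "1 / \<bar>c\<bar> \<le> 2 * B"
        using True \<open>0 < \<bar>c\<bar>\<close> by (simp add: field_simps)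
      then show "B - A + 2 / \<bar>c\<bar> \<le> 5 * B"
        using assms by simp
    qed (use assms in simp)
    finally show ?thesis
      using first_nonneg by simp
  next
    case False
    have "dnint_weight k (c * R) \<le> 1 / (1 + k * (\<bar>c\<bar> * A))" if "R \<in> {A..B}" for R
    proof (rule dnint_weight_le)
      have "\<bar>c * R\<bar> \<le> \<bar>c\<bar> * B"
        using that assms by (auto simp: abs_mult intro: mult_left_mono)
      then have "dnint (c * R) = \<bar>c * R\<bar>"
        using dnint_eq[of "c * R" 0] False by simp
      then show "\<bar>c\<bar> * A \<le> dnint (c * R)"
        using that assms by (auto simp: abs_mult intro: mult_left_mono)
    qed (use assms in auto)
    then have "integral {A..B} (\<lambda>R. dnint_weight k (c * R)) \<le> integral {A..B} (\<lambda>R. 1 / (1 + k * (\<bar>c\<bar> * A)))"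
      using assms by (intro integral_le integrable_continuous_real) (auto intro!: continuous_intros)
    also have "\<dots> = (B - A) / (1 + k * \<bar>c\<bar> * A)"
      using assms by (simp add: mult.assoc)
    finally show ?thesis
      using second_nonneg by simp
  qed
qed

text \<open>No integrability of \<open>f\<close> is needed: if \<open>f\<close> is not integrable its
  Lebesgue integral is \<open>0\<close>, which is covered by the nonnegativity of \<open>g\<close>.\<close>

lemma interval_lebesgue_integral_le_integral:
  fixes f g :: "real \<Rightarrow> real"
  assumes "a \<le> b" and g_cont: "continuous_on {a..b} g"
    and f_le_g: "\<And>x. x \<in> {a..b} \<Longrightarrow> f x \<le> g x" and g_nonneg: "\<And>x. x \<in> {a..b} \<Longrightarrow> 0 \<le> g x"
  shows "(LBINT x=a..b. f x) \<le> integral {a..b} g"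
proof -
  have g_int: "set_integrable lborel {a..b} g"
    by (rule borel_integrable_atLeastAtMost'[OF g_cont])
  then have g_int': "set_integrable lborel {a<..<b} g"
    by (rule set_integrable_subset) auto
  have "(LINT x:{a<..<b}|lborel. f x) \<le> (LINT x:{a<..<b}|lborel. g x)"
  proof (cases "set_integrable lborel {a<..<b} f")
    case True
    then show ?thesis
      by (rule set_integral_mono[OF _ g_int']) (use f_le_g in auto)
  next
    case False
    then have "(LINT x:{a<..<b}|lborel. f x) = 0"
      unfolding set_lebesgue_integral_def set_integrable_def by (rule not_integrable_integral_eq)
    moreover have "0 \<le> (LINT x:{a<..<b}|lborel. g x)"
      unfolding set_lebesgue_integral_def using g_nonneg
      by (intro Bochner_Integration.integral_nonneg) (auto simp: indicator_def)
    ultimately show ?thesis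
      by simp
  qed
  then have "(LBINT x=a..b. f x) \<le> (LBINT x=a..b. g x)"
    using \<open>a \<le> b\<close> by (simp add: interval_lebesgue_integral_le_eq)
  also have "\<dots> = integral {a..b} g"
    by (rule interval_integral_eq_integral[OF \<open>a \<le> b\<close> g_int])
  finally show ?thesis .
qed

lemma interval_integral_sqrt_minY_le:
  fixes A B Y a b :: real
  assumes "0 < A" and "A < B" and "0 < Y"
  shows "(LBINT R=A..B. sqrt (minY Y (a * R)) * sqrt (minY Y (b * R)))
    \<le> Y * (B - A) * (1 / (1 + Y * \<bar>a\<bar> * A) + 1 / (1 + Y * \<bar>b\<bar> * A)) + 20 * B * ln (1 + Y / 2)"
proof -
  define g where "g R = Y * (dnint_weight Y (a * R) + dnint_weight Y (b * R))" for R
  have g_cont: "continuous_on {A..B} g"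
    unfolding g_def using assms by (auto intro!: continuous_intros)
  have "(LBINT R=A..B. sqrt (minY Y (a * R)) * sqrt (minY Y (b * R))) \<le> integral {A..B} g"
  proof (rule interval_lebesgue_integral_le_integral[OF _ g_cont])
    fix R
    have "sqrt (minY Y (a * R)) * sqrt (minY Y (b * R)) \<le> (minY Y (a * R) + minY Y (b * R)) / 2"
      unfolding real_sqrt_mult[symmetric] using assms by (intro arith_geo_mean_sqrt minY_nonneg)
    also have "\<dots> \<le> g R"
      unfolding g_def using minY_le_dnint_weight[OF \<open>0 < Y\<close>, of "a * R"]
        minY_le_dnint_weight[OF \<open>0 < Y\<close>, of "b * R"] by (simp add: field_simps)
    finally show "sqrt (minY Y (a * R)) * sqrt (minY Y (b * R)) \<le> g R" .
    show "0 \<le> g R"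
      unfolding g_def using assms by (simp add: dnint_weight_nonneg)
  qed (use assms in simp)
  also have "integral {A..B} g
      = Y * (integral {A..B} (\<lambda>R. dnint_weight Y (a * R)) + integral {A..B} (\<lambda>R. dnint_weight Y (b * R)))"
    unfolding g_def using assms
    by (simp add: integral_add integrable_continuous_real continuous_intros)
  also have "\<dots> \<le> Y * ((B - A) / (1 + Y * \<bar>a\<bar> * A) + 10 * B * ln (1 + Y / 2) / Y
      + ((B - A) / (1 + Y * \<bar>b\<bar> * A) + 10 * B * ln (1 + Y / 2) / Y))"
    using assms by (intro mult_left_mono add_mono integral_dnint_weight_dilation_le) auto
  also have "\<dots> = Y * (B - A) * (1 / (1 + Y * \<bar>a\<bar> * A) + 1 / (1 + Y * \<bar>b\<bar> * A)) + 20 * B * ln (1 + Y / 2)"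
    using assms by (simp add: field_simps)
  finally show ?thesis .
qed

lemma Re_Im_mult_of_real_cis:
  fixes z :: complex
  shows "Re (z * of_real R * cis \<theta>) = cmod z * cos (\<theta> + Arg z) * R"
    and "Im (z * of_real R * cis \<theta>) = cmod z * sin (\<theta> + Arg z) * R"
proof -
  have polar: "z * of_real R * cis \<theta> = of_real (cmod z * R) * cis (\<theta> + Arg z)"
    by (subst rcis_cmod_Arg[of z, symmetric]) (simp add: rcis_def cis_mult algebra_simps)
  show "Re (z * of_real R * cis \<theta>) = cmod z * cos (\<theta> + Arg z) * R"
    and "Im (z * of_real R * cis \<theta>) = cmod z * sin (\<theta> + Arg z) * R"
    unfolding polar by simp_all
qed

lemma abs_sin_ge_half_abs:
  assumes "\<bar>x\<bar> \<le> pi / 2"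
  shows "\<bar>x\<bar> / 2 \<le> \<bar>sin x\<bar>"
proof -
  have "\<bar>sin x - (\<Sum>m<3. sin_coeff m * x ^ m)\<bar> \<le> inverse (fact 3) * \<bar>x\<bar> ^ 3"
    by (rule Maclaurin_sin_bound)
  moreover have "(\<Sum>m<3. sin_coeff m * x ^ m) = x"
    by (simp add: sin_coeff_def eval_nat_numeral)
  ultimately have taylor: "\<bar>sin x - x\<bar> \<le> \<bar>x\<bar> ^ 3 / 6"
    by (simp add: fact_numeral divide_simps)
  have "pi \<le> 3.2"
    using pi_approx by simp
  then have "\<bar>x\<bar> \<le> 1.6"
    using assms by linarith
  then have "\<bar>x\<bar> * \<bar>x\<bar> \<le> 3"
    using mult_mono[of "\<bar>x\<bar>" "1.6" "\<bar>x\<bar>" "1.6"] by simp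
  then have "\<bar>x\<bar> ^ 3 / 6 \<le> \<bar>x\<bar> / 2"
    using mult_left_mono[of "\<bar>x\<bar> * \<bar>x\<bar>" 3 "\<bar>x\<bar>"] by (simp add: power3_eq_cube)
  with taylor show ?thesis
    by linarith
qed

lemma dnint_divide_pi_le_abs_sin: "dnint (y / pi) \<le> \<bar>sin y\<bar>"
proof -
  define n where "n = round (y / pi)"
  define t where "t = y / pi - of_int n"
  have t: "\<bar>t\<bar> \<le> 1/2" and dnint_t: "dnint (y / pi) = \<bar>t\<bar>"
    using of_int_round_abs_le[of "y / pi"] unfolding t_def n_def dnint_def by linarith+
  have "\<bar>cos (pi * of_int n)\<bar> = 1"
    using sin_cos_squared_add[of "pi * of_int n"] by (simp add: abs_square_eq_1)
  then have "\<bar>sin y\<bar> = \<bar>sin (pi * t)\<bar>"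
    unfolding t_def by (simp add: right_diff_distrib sin_diff abs_mult)
  moreover have "\<bar>pi * t\<bar> / 2 \<le> \<bar>sin (pi * t)\<bar>"
    using t by (intro abs_sin_ge_half_abs) (simp add: abs_mult)
  moreover have "2 * \<bar>t\<bar> \<le> pi * \<bar>t\<bar>"
    using pi_gt3 by (intro mult_right_mono) auto
  ultimately show ?thesis
    using dnint_t by (simp add: abs_mult)
qed

lemma inverse_one_add_abs_sin_le_dnint_weight:
  assumes "0 \<le> k"
  shows "1 / (1 + k * \<bar>sin y\<bar>) \<le> dnint_weight k (y / pi)"
  unfolding dnint_weight_def using assms dnint_divide_pi_le_abs_sin[of y]
  by (intro frac_le add_left_mono mult_left_mono one_add_mult_dnint_pos) auto

lemma interval_integral_sqrt_minY_polar_le: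
  fixes A B Y :: real and z :: complex
  assumes "0 < A" and "A < B" and "0 < Y"
  shows "(LBINT R=A..B. sqrt (minY Y (Im (z * of_real R * cis \<theta>))) * sqrt (minY Y (Re (z * of_real R * cis \<theta>))))
    \<le> Y * (B - A) * (dnint_weight (A * Y * cmod z) ((\<theta> + Arg z) / pi)
        + dnint_weight (A * Y * cmod z) ((\<theta> + Arg z + pi / 2) / pi)) + 20 * B * ln (1 + Y / 2)"
proof -
  define s where "s = \<theta> + Arg z"
  have "1 / (1 + Y * \<bar>cmod z * sin s\<bar> * A) \<le> dnint_weight (A * Y * cmod z) (s / pi)"
    using inverse_one_add_abs_sin_le_dnint_weight[of "A * Y * cmod z" s] assms
    by (simp add: abs_mult mult_ac)
  moreover have "1 / (1 + Y * \<bar>cmod z * cos s\<bar> * A) \<le> dnint_weight (A * Y * cmod z) ((s + pi / 2) / pi)"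
    using inverse_one_add_abs_sin_le_dnint_weight[of "A * Y * cmod z" "s + pi / 2"] assms
    by (simp add: abs_mult mult_ac sin_add)
  ultimately have "Y * (B - A) * (1 / (1 + Y * \<bar>cmod z * sin s\<bar> * A) + 1 / (1 + Y * \<bar>cmod z * cos s\<bar> * A))
      \<le> Y * (B - A) * (dnint_weight (A * Y * cmod z) (s / pi) + dnint_weight (A * Y * cmod z) ((s + pi / 2) / pi))"
    using assms by (intro mult_left_mono add_mono) auto
  then show ?thesis
    using interval_integral_sqrt_minY_le[OF assms, of "cmod z * sin s" "cmod z * cos s"]
    unfolding Re_Im_mult_of_real_cis s_def[symmetric] by linarith
qed

lemma integral_dnint_weight_angle_le:
  assumes "0 < k"
  shows "integral {-pi..pi} (\<lambda>\<theta>. dnint_weight k ((\<theta> + \<phi>) / pi)) \<le> 8 * pi * ln (1 + k / 2) / k"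
proof -
  have "integral {-pi..pi} (\<lambda>\<theta>. dnint_weight k ((\<theta> + \<phi>) / pi))
      = integral {-pi..pi} (\<lambda>\<theta>. dnint_weight k (1 / pi * \<theta> + \<phi> / pi))"
    by (simp add: add_divide_distrib)
  also have "\<dots> \<le> (pi - - pi + 2 / (1 / pi)) * (2 * ln (1 + k / 2) / k)"
    using assms by (intro integral_dnint_weight_le) auto
  finally show ?thesis
    by simp
qed

lemma integral_dnint_weight_angle_pair_le:
  fixes k c d \<phi> :: real
  assumes "0 < k" and "0 \<le> c"
  shows "integral {-pi..pi} (\<lambda>\<theta>. c * (dnint_weight k ((\<theta> + \<phi>) / pi) + dnint_weight k ((\<theta> + \<phi> + pi / 2) / pi)) + d)
    \<le> c * (16 * pi * ln (1 + k / 2) / k) + 2 * pi * d"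
proof -
  define w1 w2 where "w1 \<theta> = dnint_weight k ((\<theta> + \<phi>) / pi)" and "w2 \<theta> = dnint_weight k ((\<theta> + (\<phi> + pi / 2)) / pi)" for \<theta>
  have int: "w1 integrable_on {-pi..pi}" "w2 integrable_on {-pi..pi}"
    unfolding w1_def w2_def using assms by (auto intro!: integrable_continuous_real continuous_intros)
  have "((\<lambda>\<theta>. c * (w1 \<theta> + w2 \<theta>) + d) has_integral
      c * (integral {-pi..pi} w1 + integral {-pi..pi} w2) + 2 * pi * d) {-pi..pi}"
    using int has_integral_const_real[of d "-pi" pi]
    by (intro has_integral_add has_integral_mult_right integrable_integral) (auto simp: mult_ac)
  then have "integral {-pi..pi} (\<lambda>\<theta>. c * (w1 \<theta> + w2 \<theta>) + d)
      = c * (integral {-pi..pi} w1 + integral {-pi..pi} w2) + 2 * pi * d"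
    by (simp add: integral_unique)
  also have "\<dots> \<le> c * (8 * pi * ln (1 + k / 2) / k + 8 * pi * ln (1 + k / 2) / k) + 2 * pi * d"
    unfolding w1_def w2_def using assms
    by (intro add_right_mono mult_left_mono add_mono integral_dnint_weight_angle_le) auto
  finally show ?thesis
    unfolding w1_def w2_def by (simp add: add.assoc)
qed

lemma ln_one_add_mult_le:
  fixes u y :: real
  assumes "0 \<le> u" and "0 \<le> y"
  shows "ln (1 + u * y) \<le> u + ln (1 + y)"
proof -
  have "ln (1 + u * y) \<le> ln ((1 + u) * (1 + y))"
    using assms by (subst ln_le_cancel_iff) (auto simp: algebra_simps add_pos_nonneg)
  also have "\<dots> = ln (1 + u) + ln (1 + y)"
    using assms by (simp add: ln_mult)
  also have "ln (1 + u) \<le> u"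
    using assms by (intro ln_add_one_self_le_self)
  finally show ?thesis
    by simp
qed

lemma ln_one_add_mult_div_le:
  fixes a y r :: real
  assumes "0 < a" and "0 < y" and "0 < r"
  shows "ln (1 + a * y * r / 2) / r \<le> (a / ln 2 + 1) * max 1 (1 / r) * ln (2 + y)"
proof -
  define M L where "M = max 1 (1 / r)" and "L = ln (2 + y)"
  have "1 \<le> M" "1 / r \<le> M" "ln 2 \<le> L" "ln (1 + y) \<le> L"
    unfolding M_def L_def using assms by auto
  then have "0 \<le> L"
    using ln_ge_zero[of 2] by linarith
  have "ln (1 + a * y * r / 2) / r \<le> (a * r / 2 + ln (1 + y)) / r"
    using ln_one_add_mult_le[of "a * r / 2" y] assms by (intro divide_right_mono) (auto simp: mult_ac)
  also have "\<dots> = a / 2 + 1 / r * ln (1 + y)"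
    using assms by (simp add: field_simps)
  also have "\<dots> \<le> a / ln 2 * L * M + M * L"
  proof (rule add_mono)
    have "a / 2 \<le> a / ln 2 * ln 2"
      using assms by simp
    also have "\<dots> \<le> a / ln 2 * L"
      using \<open>ln 2 \<le> L\<close> assms by (intro mult_left_mono) auto
    also have "\<dots> \<le> a / ln 2 * L * M"
      using mult_left_mono[OF \<open>1 \<le> M\<close>, of "a / ln 2 * L"] \<open>0 \<le> L\<close> assms by simp
    finally show "a / 2 \<le> a / ln 2 * L * M" .
    show "1 / r * ln (1 + y) \<le> M * L"
      using \<open>1 / r \<le> M\<close> \<open>1 \<le> M\<close> \<open>ln (1 + y) \<le> L\<close> assms by (intro mult_mono) auto
  qed
  finally show ?thesis
    unfolding M_def[symmetric] L_def[symmetric] by (simp add: algebra_simps)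
qed

lemma angle_pair_bound_le_ln:
  fixes A B Y r :: real
  assumes "0 < A" and "A < B" and "0 < Y" and "0 < r"
  shows "Y * (B - A) * (16 * pi * ln (1 + A * Y * r / 2) / (A * Y * r)) + 2 * pi * (20 * B * ln (1 + Y / 2))
    \<le> (16 * pi * (B - A) / A * (A / ln 2 + 1) + 40 * pi * B) * max 1 (1 / r) * ln (2 + Y)"
proof -
  define M L where "M = max 1 (1 / r)" and "L = ln (2 + Y)"
  have "Y * (B - A) * (16 * pi * ln (1 + A * Y * r / 2) / (A * Y * r))
      = 16 * pi * (B - A) / A * (ln (1 + A * Y * r / 2) / r)"
    using assms by (simp add: field_simps)
  also have "\<dots> \<le> 16 * pi * (B - A) / A * ((A / ln 2 + 1) * M * L)"
    unfolding M_def L_def using ln_one_add_mult_div_le[of A Y r] assms by (intro mult_left_mono) auto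
  finally have "Y * (B - A) * (16 * pi * ln (1 + A * Y * r / 2) / (A * Y * r))
      \<le> 16 * pi * (B - A) / A * ((A / ln 2 + 1) * M * L)" .
  moreover have "ln (1 + Y / 2) \<le> M * L"
  proof -
    have "ln (1 + Y / 2) \<le> L" "1 \<le> M" "0 \<le> L"
      unfolding M_def L_def using assms by auto
    then show ?thesis
      by (simp add: mult_le_cancel_right1 order_trans)
  qed
  then have "2 * pi * (20 * B * ln (1 + Y / 2)) \<le> 40 * pi * B * (M * L)"
    using assms by (simp add: mult_left_mono)
  ultimately show ?thesis
    unfolding M_def[symmetric] L_def[symmetric] by (simp add: algebra_simps)
qed

theorem lemma5:
  fixes A B :: real
  assumes "0 < A" and "A < B"
  shows "\<exists>C. \<forall>(z::complex) (Y::real). z \<noteq> 0 \<longrightarrow> Y > 0 \<longrightarrow>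
    (LBINT \<theta>=-pi..pi. (LBINT R=A..B.
        sqrt (minY Y (Im (z * of_real R * cis \<theta>))) *
        sqrt (minY Y (Re (z * of_real R * cis \<theta>)))))
    \<le> C * max 1 (1 / cmod z) * ln (2 + Y)"
proof (intro exI allI impI)
  fix z :: complex and Y :: real
  assume "z \<noteq> 0" and "Y > 0"
  define K where "K = A * Y * cmod z"
  have "0 < K"
    unfolding K_def using assms \<open>z \<noteq> 0\<close> \<open>Y > 0\<close> by simp
  define J where "J \<theta> = Y * (B - A) * (dnint_weight K ((\<theta> + Arg z) / pi)
      + dnint_weight K ((\<theta> + Arg z + pi / 2) / pi)) + 20 * B * ln (1 + Y / 2)" for \<theta>
  have "(LBINT \<theta>=-pi..pi. (LBINT R=A..B.
        sqrt (minY Y (Im (z * of_real R * cis \<theta>))) * sqrt (minY Y (Re (z * of_real R * cis \<theta>)))))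
      \<le> integral {-pi..pi} J" (is "?lhs \<le> _")
  proof (rule interval_lebesgue_integral_le_integral)
    show "(LBINT R=A..B. sqrt (minY Y (Im (z * of_real R * cis \<theta>))) * sqrt (minY Y (Re (z * of_real R * cis \<theta>))))
        \<le> J \<theta>" for \<theta>
      unfolding J_def K_def using assms \<open>Y > 0\<close> by (rule interval_integral_sqrt_minY_polar_le)
  qed (use assms \<open>Y > 0\<close> \<open>0 < K\<close> in \<open>auto simp: J_def dnint_weight_nonneg intro!: continuous_intros\<close>)
  also have "\<dots> \<le> Y * (B - A) * (16 * pi * ln (1 + K / 2) / K) + 2 * pi * (20 * B * ln (1 + Y / 2))"
    unfolding J_def using assms \<open>Y > 0\<close> \<open>0 < K\<close> by (intro integral_dnint_weight_angle_pair_le) auto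
  also have "\<dots> \<le> (16 * pi * (B - A) / A * (A / ln 2 + 1) + 40 * pi * B) * max 1 (1 / cmod z) * ln (2 + Y)"
    unfolding K_def using assms \<open>Y > 0\<close> \<open>z \<noteq> 0\<close> by (intro angle_pair_bound_le_ln) auto
  finally show "?lhs \<le> (16 * pi * (B - A) / A * (A / ln 2 + 1) + 40 * pi * B) * max 1 (1 / cmod z) * ln (2 + Y)" .
qed

end
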